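(* Let $G$ be a nonempty finite graph on $v$ vertices with $e$ edges, and let $s\ge2$ be an integer. (i) If $e>8D^2v^{1+1/s}$ for some $D>9\pi s/4$, then there exist two vertices $v_0,v_s$ such that $G$ contains more than $D^{2s}/4$ pairwise distinct trails of length $s$ from $v_0$ to $v_s$. (ii) The same conclusion holds if $G$ is bipartite with vertex classes of sizes $m$ and $n$ and $e>4D^2\min(m,n)^{1/s}\max(m,n)$ for some $D>9\pi s/4$.
   Context: A trail of length $s$ from $v_0$ to $v_s$ in a graph is a sequence $(v_0,\dots,v_s)$ of vertices such that $\{v_0,v_1\},\dots,\{v_{s-1},v_s\}$ are pairwise distinct edges of the graph (vertices may repeat). *)

theory Defs
  imports Complex_Main
begin

definition simple_graph :: "'a set \<Rightarrow> 'a set set \<Rightarrow> bool" where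
  "simple_graph V E \<longleftrightarrow> finite V \<and>
     (\<forall>ed\<in>E. \<exists>x y. x \<in> V \<and> y \<in> V \<and> x \<noteq> y \<and> ed = {x, y})"

definition trail :: "'a set set \<Rightarrow> nat \<Rightarrow> 'a list \<Rightarrow> bool" where
  "trail E s p \<longleftrightarrow> length p = s + 1 \<and>
     (\<forall>i<s. {p ! i, p ! Suc i} \<in> E) \<and>
     distinct (map (\<lambda>i. {p ! i, p ! Suc i}) [0..<s])"

definition trails_between :: "'a set set \<Rightarrow> nat \<Rightarrow> 'a \<Rightarrow> 'a \<Rightarrow> 'a list set" where
  "trails_between E s x y = {p. trail E s p \<and> hd p = x \<and> last p = y}"

definition bipartite_with :: "'a set \<Rightarrow> 'a set set \<Rightarrow> 'a set \<Rightarrow> 'a set \<Rightarrow> bool" where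
  "bipartite_with V E A B \<longleftrightarrow> A \<inter> B = {} \<and> A \<union> B = V \<and>
     (\<forall>ed\<in>E. \<exists>x y. x \<in> A \<and> y \<in> B \<and> ed = {x, y})"

end

(*
  A graph with more than c |V| edges contains a nonempty subgraph of minimum degree greater
  than c: keep deleting vertices of degree at most c. In that subgraph a trail of length
  j < s from a vertex x can be continued along at least c - j unused edges, so there are at
  least (c - s)^s trails of length s starting at x. If all of them end in a set A, some
  endpoint y receives at least (c - s)^s / |A| of them. Taking c = 2 D^2 |A|^(1/s) and using
  s <= D^2, we get (c - s)^s >= (D^2 |A|^(1/s))^s = D^(2s) |A|, hence at least D^(2s) trails
  from x to y. In general A = V; in a bipartite graph A is a colour class, and the trails end
  there when x is chosen in the right class according to the parity of s.

  The argument yields at least D^(2s) trails, and in the general case already under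
  2 D^2 |V|^(1+1/s) < |E|; the hypothesis D > 9 pi s / 4 is only used through s <= D^2.
*)

theory Submission
  imports Defs
begin

lemma simple_graph_edge_subset: "simple_graph V E \<Longrightarrow> ed \<in> E \<Longrightarrow> ed \<subseteq> V"
  unfolding simple_graph_def by fastforce

lemma simple_graph_finite_Union:
  assumes "simple_graph V E"
  shows "finite (\<Union>E)"
proof (rule finite_subset)
  show "\<Union>E \<subseteq> V" using simple_graph_edge_subset[OF assms] by blast
  show "finite V" using assms by (simp add: simple_graph_def)
qed

lemma simple_graph_finite_edges: "simple_graph V E \<Longrightarrow> finite E"
  by (rule finite_UnionD[OF simple_graph_finite_Union])

definition deg :: "'a set set \<Rightarrow> 'a \<Rightarrow> nat" where
  "deg E u = card {ed\<in>E. u \<in> ed}"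

lemma card_neighbours:
  assumes G: "simple_graph V E" and F: "F \<subseteq> E"
  shows "card {y. {u, y} \<in> F} = card {ed\<in>F. u \<in> ed}"
proof -
  have inj: "inj_on (\<lambda>y. {u, y}) {y. {u, y} \<in> F}"
    by (rule inj_onI) (auto simp: doubleton_eq_iff)
  have "{ed\<in>F. u \<in> ed} \<subseteq> (\<lambda>y. {u, y}) ` {y. {u, y} \<in> F}"
  proof
    fix ed assume ed: "ed \<in> {ed\<in>F. u \<in> ed}"
    with G F obtain a b where ab: "ed = {a, b}"
      unfolding simple_graph_def by blast
    with ed have "ed = {u, b} \<or> ed = {u, a}"
      by (auto simp: insert_commute)
    with ed show "ed \<in> (\<lambda>y. {u, y}) ` {y. {u, y} \<in> F}"
      by auto
  qed
  then have "(\<lambda>y. {u, y}) ` {y. {u, y} \<in> F} = {ed\<in>F. u \<in> ed}"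
    by (intro equalityI) auto
  with card_image[OF inj] show ?thesis
    by simp
qed

lemma simple_graph_delete_vertex:
  "simple_graph V E \<Longrightarrow> simple_graph (V - {u}) {ed\<in>E. u \<notin> ed}"
  unfolding simple_graph_def by fastforce

lemma card_edges_delete_vertex:
  assumes "finite E"
  shows "card E = card {ed\<in>E. u \<notin> ed} + deg E u"
proof -
  have "E = {ed\<in>E. u \<notin> ed} \<union> {ed\<in>E. u \<in> ed}"
    by blast
  also have "card \<dots> = card {ed\<in>E. u \<notin> ed} + deg E u"
    unfolding deg_def using assms by (intro card_Un_disjoint) auto
  finally show ?thesis .
qed

lemma density_delete_vertex:
  assumes G: "simple_graph V E" and u: "u \<in> V" and deg_u: "real (deg E u) \<le> c"
    and dense: "c * real (card V) < real (card E)"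
  shows "c * real (card (V - {u})) < real (card {ed\<in>E. u \<notin> ed})"
proof -
  have "finite V"
    using G by (simp add: simple_graph_def)
  with u have "0 < card V"
    by (auto simp: card_gt_0_iff)
  with u \<open>finite V\<close> have card_V: "real (card (V - {u})) = real (card V) - 1"
    by (simp add: of_nat_diff)
  have "c * real (card V) = c * real (card (V - {u})) + c"
    unfolding card_V by (simp add: algebra_simps)
  moreover have "real (card E) = real (card {ed\<in>E. u \<notin> ed}) + real (deg E u)"
    using card_edges_delete_vertex[OF simple_graph_finite_edges[OF G]] by (metis of_nat_add)
  ultimately show ?thesis
    using dense deg_u by linarith
qed

lemma exists_subgraph_min_degree_gt:
  assumes "simple_graph V E" and "c * real (card V) < real (card E)"
  obtains V' E' where "V' \<subseteq> V" "E' \<subseteq> E" "V' \<noteq> {}" "simple_graph V' E'"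
    "\<forall>u\<in>V'. c < real (deg E' u)"
  using assms
proof (induction "card V" arbitrary: V E rule: less_induct)
  case less
  note G = \<open>simple_graph V E\<close> and dense = \<open>c * real (card V) < real (card E)\<close>
  show ?case
  proof (cases "\<forall>u\<in>V. c < real (deg E u)")
    case True
    have "V \<noteq> {}"
    proof
      assume "V = {}"
      with G have "E = {}"
        by (auto simp: simple_graph_def)
      with \<open>V = {}\<close> dense show False by simp
    qed
    with True G show ?thesis
      by (intro less.prems(1)) auto
  next
    case False
    then obtain u where u: "u \<in> V" and deg_u: "real (deg E u) \<le> c"
      by force
    have "finite V"
      using G by (simp add: simple_graph_def)
    with u have "card (V - {u}) < card V"
      by (meson card_Diff1_less)
    then show ?thesis
    proof (rule less.hyps[OF _ _ simple_graph_delete_vertex[OF G] density_delete_vertex[OF G u deg_u dense]])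
      fix V' E'
      assume "V' \<subseteq> V - {u}" "E' \<subseteq> {ed\<in>E. u \<notin> ed}" "V' \<noteq> {}" "simple_graph V' E'"
        "\<forall>u\<in>V'. c < real (deg E' u)"
      then show thesis
        by (intro less.prems(1)) auto
    qed
  qed
qed

definition trail_edges :: "'a list \<Rightarrow> 'a set list" where
  "trail_edges p = map (\<lambda>i. {p ! i, p ! Suc i}) [0..<length p - 1]"

lemma length_trail_edges [simp]: "length (trail_edges p) = length p - 1"
  by (simp add: trail_edges_def)

lemma trail_iff_trail_edges:
  "trail E s p \<longleftrightarrow> length p = Suc s \<and> set (trail_edges p) \<subseteq> E \<and> distinct (trail_edges p)"
  unfolding trail_def trail_edges_def by (cases "length p = Suc s") auto

lemma trail_edges_snoc:
  assumes "p \<noteq> []"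
  shows "trail_edges (p @ [y]) = trail_edges p @ [{last p, y}]"
proof -
  obtain n where n: "length p = Suc n" using assms by (cases p) auto
  have "trail_edges (p @ [y]) = map (\<lambda>i. {(p @ [y]) ! i, (p @ [y]) ! Suc i}) ([0..<n] @ [n])"
    using n by (simp add: trail_edges_def)
  also have "\<dots> = trail_edges p @ [{last p, y}]"
    using n assms by (simp add: trail_edges_def nth_append last_conv_nth)
  finally show ?thesis .
qed

lemma trail_snoc:
  "p \<noteq> [] \<Longrightarrow> trail E (Suc j) (p @ [y]) \<longleftrightarrow> trail E j p \<and> {last p, y} \<in> E - set (trail_edges p)"
  by (auto simp: trail_iff_trail_edges trail_edges_snoc)

lemma trail_mono: "trail E' s p \<Longrightarrow> E' \<subseteq> E \<Longrightarrow> trail E s p"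
  unfolding trail_def by auto

lemma last_trail:
  assumes "trail E j p"
  shows "last p = p ! j"
proof -
  have len: "length p = Suc j"
    using assms by (simp add: trail_def)
  then have "p \<noteq> []"
    by auto
  with len show ?thesis
    by (simp add: last_conv_nth)
qed

lemma last_trail_mem:
  assumes G: "simple_graph V E" and p: "trail E j p" and hd: "hd p \<in> V"
  shows "last p \<in> V"
proof (cases j)
  case 0
  with p hd show ?thesis
    by (auto simp: trail_def length_Suc_conv)
next
  case (Suc i)
  with p have "{p ! i, p ! Suc i} \<in> E"
    by (simp add: trail_def)
  with G show ?thesis
    using last_trail[OF p] Suc simple_graph_edge_subset by fastforce
qed

definition trails_from :: "'a set set \<Rightarrow> nat \<Rightarrow> 'a \<Rightarrow> 'a list set" where
  "trails_from E j x = {p. trail E j p \<and> hd p = x}"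

definition extensions :: "'a set set \<Rightarrow> 'a list \<Rightarrow> 'a set" where
  "extensions E p = {y. {last p, y} \<in> E - set (trail_edges p)}"

lemma trails_from_0: "trails_from E 0 x = {[x]}"
  unfolding trails_from_def trail_def by (auto simp: length_Suc_conv)

lemma trails_from_Suc:
  "trails_from E (Suc j) x = (\<lambda>(p, y). p @ [y]) ` (SIGMA p:trails_from E j x. extensions E p)"
proof (intro equalityI subsetI)
  fix q assume q: "q \<in> trails_from E (Suc j) x"
  then have "q \<noteq> []" by (auto simp: trails_from_def trail_def)
  then obtain p y where q_eq: "q = p @ [y]" by (metis append_butlast_last_id)
  have "p \<noteq> []" using q q_eq by (auto simp: trails_from_def trail_def)
  with q q_eq have "p \<in> trails_from E j x" "y \<in> extensions E p"
    by (auto simp: trails_from_def extensions_def trail_snoc)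
  with q_eq show "q \<in> (\<lambda>(p, y). p @ [y]) ` (SIGMA p:trails_from E j x. extensions E p)"
    by auto
next
  fix q assume "q \<in> (\<lambda>(p, y). p @ [y]) ` (SIGMA p:trails_from E j x. extensions E p)"
  then obtain p y where q_eq: "q = p @ [y]" and p: "p \<in> trails_from E j x"
    and y: "y \<in> extensions E p" by auto
  have "p \<noteq> []" using p by (auto simp: trails_from_def trail_def)
  with p y q_eq show "q \<in> trails_from E (Suc j) x"
    by (auto simp: trails_from_def extensions_def trail_snoc)
qed

lemma finite_extensions: "finite (\<Union>E) \<Longrightarrow> finite (extensions E p)"
  unfolding extensions_def by (rule rev_finite_subset) auto

lemma finite_trails_from:
  assumes "finite (\<Union>E)"
  shows "finite (trails_from E j x)"
proof (induction j)
  case (Suc j)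
  with assms show ?case
    unfolding trails_from_Suc by (simp add: finite_extensions)
qed (simp add: trails_from_0)

lemma card_trails_from_Suc:
  assumes "finite (\<Union>E)"
  shows "card (trails_from E (Suc j) x) = (\<Sum>p\<in>trails_from E j x. card (extensions E p))"
proof -
  have "inj_on (\<lambda>(p, y). p @ [y]) (SIGMA p:trails_from E j x. extensions E p)"
    by (rule inj_onI) auto
  then have "card (trails_from E (Suc j) x) = card (SIGMA p:trails_from E j x. extensions E p)"
    unfolding trails_from_Suc by (rule card_image)
  also have "\<dots> = (\<Sum>p\<in>trails_from E j x. card (extensions E p))"
    using assms by (simp add: finite_trails_from finite_extensions)
  finally show ?thesis .
qed

lemma card_extensions_ge:
  assumes G: "simple_graph V E" and p: "trail E j p"
  shows "real (deg E (last p)) - real j \<le> real (card (extensions E p))"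
proof -
  let ?used = "set (trail_edges p)"
  have "card (extensions E p) = card {ed\<in>E - ?used. last p \<in> ed}"
    unfolding extensions_def by (rule card_neighbours[OF G Diff_subset])
  also have "{ed\<in>E - ?used. last p \<in> ed} = {ed\<in>E. last p \<in> ed} - ?used"
    by blast
  finally have "card {ed\<in>E. last p \<in> ed} - card ?used \<le> card (extensions E p)"
    using diff_card_le_card_Diff[OF finite_set] by simp
  moreover have "card ?used \<le> j"
    using p card_length[of "trail_edges p"] by (simp add: trail_iff_trail_edges)
  ultimately show ?thesis
    unfolding deg_def by linarith
qed

lemma card_trails_from_ge:
  assumes G: "simple_graph V E" and x: "x \<in> V"
    and deg: "\<forall>u\<in>V. c \<le> real (deg E u)" and j: "real j \<le> c"
  shows "(c - real j) ^ j \<le> real (card (trails_from E j x))"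
  using j
proof (induction j)
  case 0
  show ?case by (simp add: trails_from_0)
next
  case (Suc j)
  have ext: "c - real j \<le> real (card (extensions E p))" if "p \<in> trails_from E j x" for p
  proof -
    have "trail E j p" "hd p = x" using that by (auto simp: trails_from_def)
    with G x deg have "c \<le> real (deg E (last p))"
      using last_trail_mem by blast
    with card_extensions_ge[OF G \<open>trail E j p\<close>] show ?thesis
      by linarith
  qed
  have "(c - real (Suc j)) ^ Suc j \<le> (c - real j) ^ Suc j"
    using Suc.prems by (intro power_mono) auto
  also have "\<dots> = (c - real j) ^ j * (c - real j)"
    by simp
  also have "\<dots> \<le> real (card (trails_from E j x)) * (c - real j)"
    using Suc by (intro mult_right_mono) auto
  also have "\<dots> = (\<Sum>p\<in>trails_from E j x. c - real j)"
    by simp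
  also have "\<dots> \<le> (\<Sum>p\<in>trails_from E j x. real (card (extensions E p)))"
    using ext by (rule sum_mono)
  also have "\<dots> = real (card (trails_from E (Suc j) x))"
    using card_trails_from_Suc[OF simple_graph_finite_Union[OF G]] by simp
  finally show ?case .
qed

lemma pigeonhole_card_UN:
  assumes Y: "finite Y" "Y \<noteq> {}" and S: "\<forall>y\<in>Y. finite (S y)"
    and T: "T \<subseteq> (\<Union>y\<in>Y. S y)"
  shows "\<exists>y\<in>Y. card T \<le> card Y * card (S y)"
proof -
  have "Max ((\<lambda>y. card (S y)) ` Y) \<in> (\<lambda>y. card (S y)) ` Y"
    using Y by (intro Max_in) auto
  then obtain y where y: "y \<in> Y" "card (S y) = Max ((\<lambda>y. card (S y)) ` Y)"
    by auto
  have "card T \<le> card (\<Union>y\<in>Y. S y)"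
    using T Y S by (intro card_mono) auto
  also have "\<dots> \<le> (\<Sum>z\<in>Y. card (S z))"
    by (rule card_UN_le[OF Y(1)])
  also have "\<dots> \<le> card Y * card (S y)"
    using sum_bounded_above[of Y "\<lambda>z. card (S z)" "card (S y)"] Y y by simp
  finally show ?thesis
    using y by blast
qed

lemma card_trails_between_pigeonhole:
  assumes G': "simple_graph V' E'" and sub: "E' \<subseteq> E" and fin: "finite (\<Union>E)"
    and x: "x \<in> V'" and deg: "\<forall>u\<in>V'. c \<le> real (deg E' u)" and s: "real s \<le> c"
    and Y: "finite Y" "Y \<noteq> {}" and ends: "\<forall>p\<in>trails_from E' s x. last p \<in> Y"
  shows "\<exists>y\<in>Y. (c - real s) ^ s \<le> real (card Y) * real (card (trails_between E s x y))"
proof -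
  have "trails_from E' s x \<subseteq> (\<Union>y\<in>Y. trails_between E s x y)"
    using ends sub trail_mono by (fastforce simp: trails_from_def trails_between_def)
  moreover have "\<forall>y\<in>Y. finite (trails_between E s x y)"
    using finite_trails_from[OF fin, of s x]
    by (auto simp: trails_from_def trails_between_def elim: rev_finite_subset)
  ultimately obtain y where y: "y \<in> Y"
    and le: "card (trails_from E' s x) \<le> card Y * card (trails_between E s x y)"
    using pigeonhole_card_UN[OF Y] by blast
  have "(c - real s) ^ s \<le> real (card (trails_from E' s x))"
    using card_trails_from_ge[OF G' x deg s] .
  also have "\<dots> \<le> real (card Y) * real (card (trails_between E s x y))"
    using le by (metis of_nat_le_iff of_nat_mult)
  finally show ?thesis
    using y by blast
qed

lemma bipartite_with_commute:
  assumes "bipartite_with V E A B"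
  shows "bipartite_with V E B A"
proof -
  have "\<forall>ed\<in>E. \<exists>x y. x \<in> B \<and> y \<in> A \<and> ed = {x, y}"
    using assms unfolding bipartite_with_def by (metis insert_commute)
  with assms show ?thesis
    unfolding bipartite_with_def by (simp add: Int_commute Un_commute)
qed

lemma bipartite_edge_crosses:
  assumes bip: "bipartite_with V E A B" and edge: "{x, y} \<in> E" and x: "x \<in> A"
  shows "y \<in> B"
proof -
  from bip have disj: "A \<inter> B = {}" and cross: "\<forall>ed\<in>E. \<exists>a b. a \<in> A \<and> b \<in> B \<and> ed = {a, b}"
    unfolding bipartite_with_def by simp_all
  from cross edge obtain a b where ab: "a \<in> A" "b \<in> B" "{x, y} = {a, b}"
    by (metis (no_types, lifting))
  then have "x = a \<and> y = b \<or> x = b \<and> y = a"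
    by (simp add: doubleton_eq_iff)
  moreover have "x \<noteq> b"
    using disj ab(2) x by blast
  ultimately show ?thesis
    using ab(2) by blast
qed

lemma trail_bipartite_alternates:
  assumes bip: "bipartite_with V E A B" and p: "trail E j p" and hd: "hd p \<in> A"
  shows "i \<le> j \<Longrightarrow> p ! i \<in> (if even i then A else B)"
proof (induction i)
  case 0
  from p have "p \<noteq> []" by (auto simp: trail_def)
  with hd show ?case by (simp add: hd_conv_nth)
next
  case (Suc i)
  with p have edge: "{p ! i, p ! Suc i} \<in> E"
    by (simp add: trail_def)
  show ?case
  proof (cases "even i")
    case True
    with Suc have "p ! i \<in> A" by simp
    with True show ?thesis using bipartite_edge_crosses[OF bip edge] by simp
  next
    case False
    with Suc have "p ! i \<in> B" by simp
    with False show ?thesis using bipartite_edge_crosses[OF bipartite_with_commute[OF bip] edge] by simp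
  qed
qed

lemma last_trail_bipartite:
  assumes bip: "bipartite_with V E A B" and p: "trail E s p"
    and hd: "hd p \<in> (if even s then A else B)"
  shows "last p \<in> A"
proof (cases "even s")
  case True
  with trail_bipartite_alternates[OF bip p, of s] hd show ?thesis
    by (simp add: last_trail[OF p])
next
  case False
  with trail_bipartite_alternates[OF bipartite_with_commute[OF bip] p, of s] hd show ?thesis
    by (simp add: last_trail[OF p])
qed

lemma power_powr_inverse:
  fixes x :: real
  assumes "0 \<le> x" and "0 < n"
  shows "(x powr (1 / real n)) ^ n = x"
  using assms by (simp flip: root_powr_inverse)

lemma many_trails_from_dense_subgraph:
  fixes D a :: real
  assumes fin: "finite (\<Union>E)" and G': "simple_graph V' E'" and sub: "E' \<subseteq> E" and x: "x \<in> V'"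
    and deg: "\<forall>u\<in>V'. 2 * D\<^sup>2 * a < real (deg E' u)" and D: "real s \<le> D\<^sup>2"
    and a: "1 \<le> a" "a ^ s = real (card A)" and A: "finite A" "Y \<subseteq> A" "Y \<noteq> {}"
    and ends: "\<forall>p\<in>trails_from E' s x. last p \<in> Y"
  shows "\<exists>y\<in>Y. D ^ (2 * s) \<le> real (card (trails_between E s x y))"
proof -
  define L where "L = D\<^sup>2 * a"
  have "D\<^sup>2 \<le> L"
    unfolding L_def using mult_left_mono[OF a(1), of "D\<^sup>2"] by simp
  with D have L_ge: "real s \<le> L"
    by (rule order_trans)
  have deg': "\<forall>u\<in>V'. 2 * L \<le> real (deg E' u)"
    using deg by (auto simp: L_def intro: less_imp_le)
  have "real s \<le> 2 * L"
    using L_ge of_nat_0_le_iff[of s] by linarith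
  moreover have "finite Y"
    using A(1,2) by (rule finite_subset[rotated])
  ultimately obtain y where y: "y \<in> Y"
    and le: "(2 * L - real s) ^ s \<le> real (card Y) * real (card (trails_between E s x y))"
    using card_trails_between_pigeonhole[OF G' sub fin x deg'] A(3) ends by blast
  have card_pos: "0 < card A"
    using A card_gt_0_iff by blast
  have "real (card A) * D ^ (2 * s) = L ^ s"
    by (simp add: L_def power_mult_distrib power_mult a(2))
  also have "\<dots> \<le> (2 * L - real s) ^ s"
    using L_ge by (intro power_mono) auto
  also have "\<dots> \<le> real (card Y) * real (card (trails_between E s x y))"
    by (rule le)
  also have "\<dots> \<le> real (card A) * real (card (trails_between E s x y))"
    using card_mono[OF A(1,2)] by (intro mult_right_mono) auto
  finally have "D ^ (2 * s) \<le> real (card (trails_between E s x y))"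
    using card_pos by (simp add: mult_le_cancel_left_pos)
  with y show ?thesis ..
qed

lemma many_trails_if_dense:
  fixes D :: real
  assumes G: "simple_graph V E" and V: "V \<noteq> {}" and s: "1 \<le> s" and D: "real s \<le> D\<^sup>2"
    and dense: "2 * D\<^sup>2 * real (card V) powr (1 + 1 / real s) < real (card E)"
  shows "\<exists>x\<in>V. \<exists>y\<in>V. D ^ (2 * s) \<le> real (card (trails_between E s x y))"
proof -
  have finV: "finite V"
    using G by (simp add: simple_graph_def)
  with V have card_pos: "0 < card V"
    by (simp add: card_gt_0_iff)
  define a where "a = real (card V) powr (1 / real s)"
  have a: "1 \<le> a" "a ^ s = real (card V)"
    unfolding a_def using card_pos s by (auto intro: ge_one_powr_ge_zero power_powr_inverse)
  have "2 * D\<^sup>2 * a * real (card V) < real (card E)"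
    using dense card_pos by (simp add: a_def powr_add algebra_simps)
  then obtain V' E' where sub: "V' \<subseteq> V" "E' \<subseteq> E" "V' \<noteq> {}" "simple_graph V' E'"
    and deg: "\<forall>u\<in>V'. 2 * D\<^sup>2 * a < real (deg E' u)"
    using exists_subgraph_min_degree_gt[OF G] by blast
  obtain x where x: "x \<in> V'"
    using sub(3) by blast
  have "\<forall>p\<in>trails_from E' s x. last p \<in> V'"
    using last_trail_mem[OF sub(4)] x by (auto simp: trails_from_def)
  then obtain y where "y \<in> V'" "D ^ (2 * s) \<le> real (card (trails_between E s x y))"
    using many_trails_from_dense_subgraph[OF simple_graph_finite_Union[OF G] sub(4) sub(2) x deg D a
        finV sub(1) sub(3)] by blast
  with x sub(1) show ?thesis
    by blast
qed

lemma bipartite_subgraph_meets_classes: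
  assumes bip: "bipartite_with V E A B" and G': "simple_graph V' E'" and sub: "E' \<subseteq> E"
    and deg: "deg E' u \<noteq> 0"
  obtains a b where "a \<in> V' \<inter> A" "b \<in> V' \<inter> B"
proof -
  from deg have "{ed\<in>E'. u \<in> ed} \<noteq> {}"
    unfolding deg_def by (metis card.empty)
  then obtain ed where ed: "ed \<in> E'"
    by blast
  from bip have "\<forall>ed\<in>E. \<exists>a b. a \<in> A \<and> b \<in> B \<and> ed = {a, b}"
    unfolding bipartite_with_def by simp
  with sub ed have "\<exists>a b. a \<in> A \<and> b \<in> B \<and> ed = {a, b}"
    by blast
  then obtain a b where "a \<in> A" "b \<in> B" "ed = {a, b}"
    by blast
  with simple_graph_edge_subset[OF G' ed] show thesis
    by (intro that[of a b]) auto
qed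

lemma many_trails_if_dense_bipartite:
  fixes D :: real
  assumes G: "simple_graph V E" and bip: "bipartite_with V E A B" and s: "1 \<le> s"
    and D: "real s \<le> D\<^sup>2"
    and dense: "2 * D\<^sup>2 * real (card A) powr (1 / real s) * real (card V) < real (card E)"
  shows "\<exists>x\<in>V. \<exists>y\<in>V. D ^ (2 * s) \<le> real (card (trails_between E s x y))"
proof -
  from bip have "A \<union> B = V" and cross: "\<forall>ed\<in>E. \<exists>a b. a \<in> A \<and> b \<in> B \<and> ed = {a, b}"
    unfolding bipartite_with_def by simp_all
  with G have finA: "finite A"
    by (auto simp: simple_graph_def intro: finite_subset)
  have "A \<noteq> {}"
  proof
    assume "A = {}"
    with cross have "E = {}" by blast
    with \<open>A = {}\<close> dense show False by simp
  qed
  with finA have card_pos: "0 < card A"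
    by (simp add: card_gt_0_iff)
  define a where "a = real (card A) powr (1 / real s)"
  have a: "1 \<le> a" "a ^ s = real (card A)"
    unfolding a_def using card_pos s by (auto intro: ge_one_powr_ge_zero power_powr_inverse)
  from dense have "2 * D\<^sup>2 * a * real (card V) < real (card E)"
    by (simp add: a_def)
  then obtain V' E' where sub: "V' \<subseteq> V" "E' \<subseteq> E" "V' \<noteq> {}" "simple_graph V' E'"
    and deg: "\<forall>u\<in>V'. 2 * D\<^sup>2 * a < real (deg E' u)"
    using exists_subgraph_min_degree_gt[OF G] by blast
  obtain u where u: "u \<in> V'"
    using sub(3) by blast
  have "0 \<le> 2 * D\<^sup>2 * a"
    using a(1) by simp
  with deg u have "deg E' u \<noteq> 0"
    by (metis of_nat_0 order_le_less_trans less_irrefl)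
  then obtain a0 b0 where a0: "a0 \<in> V' \<inter> A" and b0: "b0 \<in> V' \<inter> B"
    using bipartite_subgraph_meets_classes[OF bip sub(4) sub(2)] by blast
  define x where "x = (if even s then a0 else b0)"
  have x: "x \<in> V'" "x \<in> (if even s then A else B)"
    using a0 b0 by (auto simp: x_def)
  have "\<forall>p\<in>trails_from E' s x. last p \<in> V' \<inter> A"
  proof
    fix p assume "p \<in> trails_from E' s x"
    then have tr: "trail E' s p" and "hd p = x"
      by (auto simp: trails_from_def)
    with x show "last p \<in> V' \<inter> A"
      using last_trail_mem[OF sub(4) tr] last_trail_bipartite[OF bip trail_mono[OF tr sub(2)]] by simp
  qed
  moreover have "V' \<inter> A \<noteq> {}"
    using a0 by blast
  ultimately obtain y where "y \<in> V' \<inter> A" "D ^ (2 * s) \<le> real (card (trails_between E s x y))"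
    using many_trails_from_dense_subgraph[OF simple_graph_finite_Union[OF G] sub(4) sub(2) x(1) deg D a
        finA Int_lower2] by blast
  with x sub(1) show ?thesis
    by blast
qed

lemma many_trails_if_dense_bipartite_min_max:
  fixes D :: real
  assumes G: "simple_graph V E" and bip: "bipartite_with V E A B" and s: "1 \<le> s"
    and D: "real s \<le> D\<^sup>2"
    and dense: "4 * D\<^sup>2 * real (min (card A) (card B)) powr (1 / real s)
                  * real (max (card A) (card B)) < real (card E)"
  shows "\<exists>x\<in>V. \<exists>y\<in>V. D ^ (2 * s) \<le> real (card (trails_between E s x y))"
proof -
  obtain C C' where bip': "bipartite_with V E C C'" and C: "card C = min (card A) (card B)"
  proof (cases "card A \<le> card B")
    case True
    with bip show ?thesis
      by (intro that[of A B]) (simp_all add: min_def)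
  next
    case False
    with bipartite_with_commute[OF bip] show ?thesis
      by (intro that[of B A]) (simp_all add: min_def)
  qed
  have "A \<union> B = V"
    using bip by (simp add: bipartite_with_def)
  then have "card V \<le> card A + card B"
    using card_Un_le by metis
  then have "real (card V) \<le> 2 * real (max (card A) (card B))"
    by simp
  moreover have "0 \<le> 2 * D\<^sup>2 * real (card C) powr (1 / real s)"
    by simp
  ultimately have "2 * D\<^sup>2 * real (card C) powr (1 / real s) * real (card V)
      \<le> 2 * D\<^sup>2 * real (card C) powr (1 / real s) * (2 * real (max (card A) (card B)))"
    by (rule mult_left_mono)
  also have "\<dots> = 4 * D\<^sup>2 * real (min (card A) (card B)) powr (1 / real s)
                    * real (max (card A) (card B))"
    unfolding C by simp
  also have "\<dots> < real (card E)"
    by (rule dense)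
  finally show ?thesis
    using many_trails_if_dense_bipartite[OF G bip' s D] by blast
qed

lemma le_square_if_gt_pi_bound:
  fixes D :: real
  assumes D: "9 * pi * real s / 4 < D" and s: "1 \<le> s"
  shows "real s \<le> D\<^sup>2" and "0 < D"
proof -
  have "1 \<le> 9 * pi / 4"
    using pi_ge_two by simp
  then have "real s * 1 \<le> real s * (9 * pi / 4)"
    by (intro mult_left_mono) auto
  also have "\<dots> = 9 * pi * real s / 4"
    by simp
  also have "\<dots> < D"
    by (rule D)
  finally have "real s < D"
    by simp
  with s show "0 < D"
    by simp
  from \<open>real s < D\<close> s have "1 \<le> D"
    by simp
  then have "D \<le> D * D"
    using mult_left_mono[of 1 D D] by simp
  with \<open>real s < D\<close> show "real s \<le> D\<^sup>2"
    unfolding power2_eq_square by linarith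
qed

theorem theorem5p3:
  fixes V :: "'a set" and E :: "'a set set" and s :: nat
  assumes G: "simple_graph V E" and nonempty: "V \<noteq> {}" and s2: "s \<ge> 2"
  shows
    "(\<forall>D::real. D > 9 * pi * real s / 4 \<longrightarrow>
        real (card E) > 8 * D\<^sup>2 * real (card V) powr (1 + 1 / real s) \<longrightarrow>
        (\<exists>x\<in>V. \<exists>y\<in>V. real (card (trails_between E s x y)) > D ^ (2 * s) / 4))
     \<and>
     (\<forall>A B (D::real). bipartite_with V E A B \<longrightarrow> D > 9 * pi * real s / 4 \<longrightarrow>
        real (card E) > 4 * D\<^sup>2 * real (min (card A) (card B)) powr (1 / real s)
                          * real (max (card A) (card B)) \<longrightarrow>
        (\<exists>x\<in>V. \<exists>y\<in>V. real (card (trails_between E s x y)) > D ^ (2 * s) / 4))"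
proof -
  have s: "1 \<le> s"
    using s2 by simp
  have quarter: "\<exists>x\<in>V. \<exists>y\<in>V. D ^ (2 * s) / 4 < real (card (trails_between E s x y))"
    if "0 < D" and "\<exists>x\<in>V. \<exists>y\<in>V. D ^ (2 * s) \<le> real (card (trails_between E s x y))" for D :: real
  proof -
    have "D ^ (2 * s) / 4 < D ^ (2 * s)"
      using \<open>0 < D\<close> by simp
    with that(2) show ?thesis
      by (blast intro: less_le_trans)
  qed
  show ?thesis
  proof (intro conjI allI impI)
    fix D :: real
    assume D: "D > 9 * pi * real s / 4"
      and dense: "real (card E) > 8 * D\<^sup>2 * real (card V) powr (1 + 1 / real s)"
    have "0 \<le> D\<^sup>2 * real (card V) powr (1 + 1 / real s)"
      by simp
    with dense have "2 * D\<^sup>2 * real (card V) powr (1 + 1 / real s) < real (card E)"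
      by linarith
    with le_square_if_gt_pi_bound[OF D s] show
      "\<exists>x\<in>V. \<exists>y\<in>V. real (card (trails_between E s x y)) > D ^ (2 * s) / 4"
      using quarter many_trails_if_dense[OF G nonempty s] by blast
  next
    fix A B and D :: real
    assume "bipartite_with V E A B" and D: "D > 9 * pi * real s / 4"
      and "real (card E) > 4 * D\<^sup>2 * real (min (card A) (card B)) powr (1 / real s)
                          * real (max (card A) (card B))"
    with le_square_if_gt_pi_bound[OF D s] show
      "\<exists>x\<in>V. \<exists>y\<in>V. real (card (trails_between E s x y)) > D ^ (2 * s) / 4"
      using quarter many_trails_if_dense_bipartite_min_max[OF G _ s] by blast
  qed
qed

end
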